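(* Let $N\ge1$, $m=2$, $d=1$, and for every $t=1,\dots,N$ let $m_t=3$, $(q^{(t)}_1,q^{(t)}_2,q^{(t)}_3)=(0,1/2,3/2)$ and $\boldsymbol a^{(t)}=(1/3,1/3,1/3)$. Consider the point $X=(0,1)$, $\boldsymbol w=(1/3,2/3)$, and for all $t$, $\Pi^{(t)}$ with first row $(1/3,0,0)$ and second row $(0,1/3,1/3)$. Then: (i) with $X$ fixed, $(\boldsymbol w,\Pi^{(1)},\dots,\Pi^{(N)})$ is an optimal solution of the resulting linear program; (ii) with $(\boldsymbol w,\Pi^{(1)},\dots,\Pi^{(N)})$ fixed, $X$ minimizes the objective over $X\in\mathbb{R}^2$; (iii) nevertheless, this point is not a local minimum of the free support problem, and for every $\delta\in(0,1/2)$ there is a feasible point with $X=(\delta,1)$ and strictly smaller objective value.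
   Context: Free support problem: given discrete measures with support points $q^{(t)}_j\in\mathbb{R}^d$ and weights $\boldsymbol a^{(t)}\in\mathbb{R}^{m_t}$ (nonnegative, summing to 1), $t=1,\dots,N$, minimize $\sum_{t=1}^N\sum_{i=1}^m\sum_{j=1}^{m_t}\pi^{(t)}_{ij}\|\boldsymbol x_i-\boldsymbol q^{(t)}_j\|^2$ over $X=(\boldsymbol x_1,\dots,\boldsymbol x_m)\in(\mathbb{R}^d)^m$, $\boldsymbol w\in\mathbb{R}^m$ and $\Pi^{(t)}=[\pi^{(t)}_{ij}]\in\mathbb{R}^{m\times m_t}$, subject to $\boldsymbol w\ge0$, $\boldsymbol 1_m^{\top}\boldsymbol w=1$, $\Pi^{(t)}\ge0$, $\Pi^{(t)}\boldsymbol 1_{m_t}=\boldsymbol w$, $(\Pi^{(t)})^{\top}\boldsymbol 1_m=\boldsymbol a^{(t)}$ for all $t$. For fixed $X$ this is a linear program in $(\boldsymbol w,\Pi^{(1)},\dots,\Pi^{(N)})$. A local minimum means a feasible point whose objective value is no larger than that of every feasible point in some neighborhood of it (in the joint variables). *)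

theory Defs
  imports "HOL-Analysis.Analysis"
begin

text \<open>Free support problem with d = 1.  The measures are indexed by a finite
  type 'n (so N = CARD('n) \<ge> 1), the barycenter support points by the finite
  type 'm, and the support points of each input measure by the finite type 'k.\<close>

definition fs_obj :: "real^'k^'n \<Rightarrow> real^'m \<Rightarrow> real^'k^'m^'n \<Rightarrow> real" where
  "fs_obj q X P = (\<Sum>t\<in>UNIV. \<Sum>i\<in>UNIV. \<Sum>j\<in>UNIV. P$t$i$j * (X$i - q$t$j)^2)"

definition fs_feasible :: "real^'k^'n \<Rightarrow> real^'m \<Rightarrow> real^'k^'m^'n \<Rightarrow> bool" where
  "fs_feasible a w P \<longleftrightarrow>
     (\<forall>i. w$i \<ge> 0) \<and> (\<Sum>i\<in>UNIV. w$i) = 1 \<and>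
     (\<forall>t i j. P$t$i$j \<ge> 0) \<and>
     (\<forall>t i. (\<Sum>j\<in>UNIV. P$t$i$j) = w$i) \<and>
     (\<forall>t j. (\<Sum>i\<in>UNIV. P$t$i$j) = a$t$j)"

definition fs_local_min ::
  "real^'k^'n \<Rightarrow> real^'k^'n \<Rightarrow> real^'m \<Rightarrow> real^'m \<Rightarrow> real^'k^'m^'n \<Rightarrow> bool" where
  "fs_local_min q a X w P \<longleftrightarrow> fs_feasible a w P \<and>
     (\<exists>e>0. \<forall>X' w' P'. dist (X', w', P') (X, w, P) < e \<longrightarrow> fs_feasible a w' P' \<longrightarrow>
        fs_obj q X P \<le> fs_obj q X' P')"

end

theory Submission
  imports Defs
begin

text \<open>Each input measure (0, 1/2, 3/2) with equal weights is split between the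
  barycenter points 0 and 1, and the chosen plan sends the mass at 1/2 to 1.  For fixed
  X this plan is LP-optimal and for a fixed plan X is the vector of conditional means.
  Yet moving an amount d of the mass at 1/2 to the point 0 while simultaneously moving
  that point to d changes the cost by d^3 - 2d^2/3 < 0: the joint problem has a
  descent direction that neither block sees.\<close>

definition plan_cost :: "real^'k \<Rightarrow> real^'m \<Rightarrow> real^'k^'m \<Rightarrow> real" where
  "plan_cost Q X R = (\<Sum>i\<in>UNIV. \<Sum>j\<in>UNIV. R$i$j * (X$i - Q$j)^2)"

definition is_coupling :: "real^'k \<Rightarrow> real^'m \<Rightarrow> real^'k^'m \<Rightarrow> bool" where
  "is_coupling A w R \<longleftrightarrow>
     (\<forall>i j. R$i$j \<ge> 0) \<and> (\<forall>i. (\<Sum>j\<in>UNIV. R$i$j) = w$i) \<and> (\<forall>j. (\<Sum>i\<in>UNIV. R$i$j) = A$j)"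

lemma fs_obj_eq_sum_plan_cost: "fs_obj q X P = (\<Sum>t\<in>UNIV. plan_cost (q$t) X (P$t))"
  by (simp add: fs_obj_def plan_cost_def)

lemma fs_obj_uniform:
  "fs_obj (\<chi> t. Q :: real^'k^'n) X (\<chi> t. R) = real CARD('n) * plan_cost Q X R"
  by (simp add: fs_obj_eq_sum_plan_cost)

lemma fs_feasible_iff_couplings:
  "fs_feasible a w P \<longleftrightarrow>
     (\<forall>i. w$i \<ge> 0) \<and> (\<Sum>i\<in>UNIV. w$i) = 1 \<and> (\<forall>t. is_coupling (a$t) w (P$t))"
  unfolding fs_feasible_def is_coupling_def by blast

lemma fs_feasible_uniform:
  "fs_feasible (\<chi> t. A) w (\<chi> t. R) \<longleftrightarrow>
     (\<forall>i. w$i \<ge> 0) \<and> (\<Sum>i\<in>UNIV. w$i) = 1 \<and> is_coupling A w R"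
  by (simp add: fs_feasible_iff_couplings)

lemma not_fs_local_min_if_descent:
  assumes lim: "((\<lambda>s. (Xs s, ws s, Ps s)) \<longlongrightarrow> (X, w, P)) F" and "F \<noteq> bot"
    and descent: "eventually (\<lambda>s. fs_feasible a (ws s) (Ps s) \<and> fs_obj q (Xs s) (Ps s) < fs_obj q X P) F"
  shows "\<not> fs_local_min q a X w P"
proof
  assume "fs_local_min q a X w P"
  then obtain e where "e > 0" and min: "\<And>X' w' P'. dist (X', w', P') (X, w, P) < e \<Longrightarrow>
      fs_feasible a w' P' \<Longrightarrow> fs_obj q X P \<le> fs_obj q X' P'"
    unfolding fs_local_min_def by blast
  with lim have "eventually (\<lambda>s. dist (Xs s, ws s, Ps s) (X, w, P) < e) F"
    by (simp add: tendsto_iff)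
  with descent obtain s where "dist (Xs s, ws s, Ps s) (X, w, P) < e"
    "fs_feasible a (ws s) (Ps s)" "fs_obj q (Xs s) (Ps s) < fs_obj q X P"
    using eventually_happens'[OF \<open>F \<noteq> bot\<close>] eventually_conj by blast
  with min show False by fastforce
qed

lemma tendsto_vector_2 [tendsto_intros]:
  "(f \<longlongrightarrow> a) F \<Longrightarrow> (g \<longlongrightarrow> b) F \<Longrightarrow>
    ((\<lambda>x. vector [f x, g x] :: 'a::{zero,topological_space}^2) \<longlongrightarrow> vector [a, b]) F"
  apply (rule vec_tendstoI)
  subgoal for i using exhaust_2[of i] by auto
  done

lemma tendsto_vector_3 [tendsto_intros]:
  "(f \<longlongrightarrow> a) F \<Longrightarrow> (g \<longlongrightarrow> b) F \<Longrightarrow> (h \<longlongrightarrow> c) F \<Longrightarrow>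
    ((\<lambda>x. vector [f x, g x, h x] :: 'a::{zero,topological_space}^3) \<longlongrightarrow> vector [a, b, c]) F"
  apply (rule vec_tendstoI)
  subgoal for i using exhaust_3[of i] by auto
  done

definition ex_points :: "real^3" where "ex_points = vector [0, 1/2, 3/2]"

definition ex_weights :: "real^3" where "ex_weights = vector [1/3, 1/3, 1/3]"

definition ex_mass :: "real \<Rightarrow> real^2" where "ex_mass d = vector [1/3 + d, 2/3 - d]"

definition ex_plan :: "real \<Rightarrow> real^3^2" where
  "ex_plan d = vector [vector [1/3, d, 0], vector [0, 1/3 - d, 1/3]]"

lemma fs_feasible_ex_plan:
  assumes "0 \<le> d" "d \<le> 1/3"
  shows "fs_feasible (\<chi> t. ex_weights) (ex_mass d) (\<chi> t. ex_plan d)"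
  using assms unfolding fs_feasible_uniform is_coupling_def
  by (simp add: ex_mass_def ex_plan_def ex_weights_def sum_2 sum_3 forall_2 forall_3)

lemma plan_cost_ex_plan:
  "plan_cost ex_points (vector [x, 1]) (ex_plan d) = x^2/3 + d * (x - 1/2)^2 + 1/6 - d/4"
  by (simp add: plan_cost_def ex_points_def ex_plan_def sum_2 sum_3 power2_eq_square field_simps)

lemma plan_cost_ex_plan_0_ge: "1/6 \<le> plan_cost ex_points X (ex_plan 0)"
proof -
  have "plan_cost ex_points X (ex_plan 0) = (X$1)^2/3 + 2 * (X$2 - 1)^2/3 + 1/6"
    by (simp add: plan_cost_def ex_points_def ex_plan_def sum_2 sum_3 power2_eq_square field_simps)
  then show ?thesis by simp
qed

lemma plan_cost_ge_if_coupling: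
  fixes R :: "real^3^2"
  assumes "is_coupling ex_weights w R"
  shows "1/6 \<le> plan_cost ex_points (vector [0, 1]) R"
proof -
  have col: "R$1$j + R$2$j = ex_weights $ j" and nonneg: "R$i$j \<ge> 0" for i j
    using assms unfolding is_coupling_def by (auto simp: sum_2)
  have "plan_cost ex_points (vector [0, 1]) R
      = R$1$2/4 + 9 * R$1$3/4 + R$2$1 + R$2$2/4 + R$2$3/4"
    by (simp add: plan_cost_def ex_points_def sum_2 sum_3 power2_eq_square)
  moreover have "R$1$2 + R$2$2 = 1/3" "R$1$3 + R$2$3 = 1/3"
    using col[of 2] col[of 3] by (simp_all add: ex_weights_def)
  ultimately show ?thesis
    using nonneg[of 1 3] nonneg[of 2 1] by linarith
qed

lemma plan_cost_ex_plan_descent: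
  assumes "0 < d" "d < 2/3"
  shows "plan_cost ex_points (vector [d, 1]) (ex_plan d) < 1/6"
proof -
  have "plan_cost ex_points (vector [d, 1]) (ex_plan d) = 1/6 - d^2 * (2/3 - d)"
    by (simp add: plan_cost_ex_plan power2_eq_square field_simps)
  moreover have "d^2 * (2/3 - d) > 0"
    using assms by simp
  ultimately show ?thesis by linarith
qed

lemma plan_cost_ex_plan_third:
  assumes "0 < x" "x < 1/2"
  shows "plan_cost ex_points (vector [x, 1]) (ex_plan (1/3)) < 1/6"
proof -
  have "plan_cost ex_points (vector [x, 1]) (ex_plan (1/3)) = 1/6 - x * (1 - 2*x)/3"
    by (simp add: plan_cost_ex_plan power2_eq_square field_simps)
  moreover have "x * (1 - 2*x) > 0"
    using assms by simp
  ultimately show ?thesis by linarith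
qed

lemma ex_path_tendsto:
  "((\<lambda>d. (vector [d, 1] :: real^2, ex_mass d, \<chi> t::'n::finite. ex_plan d))
     \<longlongrightarrow> (vector [0, 1], ex_mass 0, \<chi> t. ex_plan 0)) (at_right 0)"
  unfolding ex_mass_def ex_plan_def by (intro tendsto_intros) (auto intro!: tendsto_eq_intros)

theorem mainTheorem8:
  fixes q a :: "real^3^'n" and X w :: "real^2" and P :: "real^3^2^'n"
  assumes "q = (\<chi> t. vector [0, 1/2, 3/2])"
      and "a = (\<chi> t. vector [1/3, 1/3, 1/3])"
      and "X = vector [0, 1]"
      and "w = vector [1/3, 2/3]"
      and "P = (\<chi> t. vector [vector [1/3, 0, 0], vector [0, 1/3, 1/3]])"
  shows "(fs_feasible a w P \<and>
          (\<forall>w' P'. fs_feasible a w' P' \<longrightarrow> fs_obj q X P \<le> fs_obj q X P'))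
       \<and> (\<forall>X'. fs_obj q X P \<le> fs_obj q X' P)
       \<and> \<not> fs_local_min q a X w P
       \<and> (\<forall>\<delta>::real. 0 < \<delta> \<and> \<delta> < 1/2 \<longrightarrow>
            (\<exists>(w'::real^2) (P'::real^3^2^'n). fs_feasible a w' P' \<and> fs_obj q (vector [\<delta>, 1] :: real^2) P' < fs_obj q X P))"
proof -
  define N where "N = real CARD('n)"
  have data: "q = (\<chi> t. ex_points)" "a = (\<chi> t. ex_weights)" "w = ex_mass 0" "P = (\<chi> t. ex_plan 0)"
    using assms by (simp_all add: ex_points_def ex_weights_def ex_mass_def ex_plan_def)
  have obj_XP: "fs_obj q X P = N/6"
    using plan_cost_ex_plan[of 0 0] by (simp add: data assms(3) fs_obj_uniform N_def)
  have "fs_feasible a w P"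
    using fs_feasible_ex_plan[of 0] by (simp add: data)
  moreover have "fs_obj q X P \<le> fs_obj q X P'" if "fs_feasible a w' P'" for w' P'
  proof -
    have per_measure: "1/6 \<le> plan_cost ex_points X (P'$t)" for t
      using that plan_cost_ge_if_coupling by (auto simp: data assms(3) fs_feasible_iff_couplings)
    have "(\<Sum>t::'n\<in>UNIV. 1/6) \<le> fs_obj q X P'"
      unfolding fs_obj_eq_sum_plan_cost data vec_lambda_beta by (rule sum_mono) (rule per_measure)
    then show ?thesis by (simp add: obj_XP N_def)
  qed
  moreover have "fs_obj q X P \<le> fs_obj q X' P" for X'
    unfolding obj_XP using plan_cost_ex_plan_0_ge[of X'] by (simp add: data fs_obj_uniform N_def)
  moreover have "\<not> fs_local_min q a X w P"
  proof (rule not_fs_local_min_if_descent)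
    show "((\<lambda>d. (vector [d, 1], ex_mass d, \<chi> t. ex_plan d)) \<longlongrightarrow> (X, w, P)) (at_right 0)"
      using ex_path_tendsto by (simp add: data assms(3))
    have "eventually (\<lambda>d::real. d \<in> {0<..<1/3}) (at_right 0)"
      by (rule eventually_at_right_real) simp
    then show "eventually (\<lambda>d. fs_feasible a (ex_mass d) (\<chi> t. ex_plan d) \<and>
        fs_obj q (vector [d, 1]) (\<chi> t. ex_plan d) < fs_obj q X P) (at_right 0)"
    proof eventually_elim
      case (elim d)
      then show ?case unfolding obj_XP using fs_feasible_ex_plan[of d] plan_cost_ex_plan_descent[of d]
        by (simp add: data fs_obj_uniform N_def)
    qed
  qed simp
  moreover have "fs_feasible a (ex_mass (1/3)) (\<chi> t. ex_plan (1/3)) \<and>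
      fs_obj q (vector [\<delta>, 1]) (\<chi> t. ex_plan (1/3)) < fs_obj q X P" if "0 < \<delta>" "\<delta> < 1/2" for \<delta>
    unfolding obj_XP using fs_feasible_ex_plan[of "1/3"] plan_cost_ex_plan_third[OF that]
    by (simp add: data fs_obj_uniform N_def)
  ultimately show ?thesis by blast
qed

end
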